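(* Let $G=(\mathcal{X},\mathcal{E})$ be a (simple, undirected) graph on a finite vertex set and $P$ a pmf on $\mathcal{X}$. Then $I_2(G,P)\le H_2(G,P)$.
   Context: $\log$ is base 2. $I_2(G,P):=-\log\sum_{(x,x')\in\mathcal{X}^2:\,\{x,x'\}\notin\mathcal{E}}P(x)P(x')$ (pairs with $x=x'$ are included, since singletons are never edges). Let $\mathcal{Y}\subseteq2^{\mathcal{X}}$ be the set of maximal independent sets of $G$, and let $\Delta(G,P)$ be the set of pmfs $P(x,y)$ on $\mathcal{X}\times\mathcal{Y}$ whose $\mathcal{X}$-marginal is $P$ and with $\sum_{(x,y):x\in y}P(x,y)=1$; write $P(y)$ for the $\mathcal{Y}$-marginal. Define $H_2(G,P):=\min_{P(x,y)\in\Delta(G,P)}\Big(-\log\sum_{(x,y):x\in y}P(x)P(y)\Big)$. *)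

theory Defs
  imports "HOL-Analysis.Analysis"
begin

definition simple_graph :: "'a set \<Rightarrow> 'a set set \<Rightarrow> bool" where
  "simple_graph X E \<longleftrightarrow> finite X \<and> (\<forall>e\<in>E. e \<subseteq> X \<and> card e = 2)"

definition is_pmf_on :: "'a set \<Rightarrow> ('a \<Rightarrow> real) \<Rightarrow> bool" where
  "is_pmf_on X P \<longleftrightarrow> (\<forall>x\<in>X. 0 \<le> P x) \<and> (\<Sum>x\<in>X. P x) = 1"

definition independent_set :: "'a set set \<Rightarrow> 'a set \<Rightarrow> bool" where
  "independent_set E S \<longleftrightarrow> (\<forall>x\<in>S. \<forall>x'\<in>S. {x, x'} \<notin> E)"

definition max_indep_sets :: "'a set \<Rightarrow> 'a set set \<Rightarrow> 'a set set" where
  "max_indep_sets X E = {S. S \<subseteq> X \<and> independent_set E S \<and>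
      (\<forall>T. S \<subset> T \<and> T \<subseteq> X \<longrightarrow> \<not> independent_set E T)}"

definition I2 :: "'a set \<Rightarrow> 'a set set \<Rightarrow> ('a \<Rightarrow> real) \<Rightarrow> real" where
  "I2 X E P = - log 2 (\<Sum>x\<in>X. \<Sum>x'\<in>X. if {x, x'} \<notin> E then P x * P x' else 0)"

definition Delta :: "'a set \<Rightarrow> 'a set set \<Rightarrow> ('a \<Rightarrow> real) \<Rightarrow> ('a \<Rightarrow> 'a set \<Rightarrow> real) set" where
  "Delta X E P = {Q. (\<forall>x\<in>X. \<forall>y\<in>max_indep_sets X E. 0 \<le> Q x y)
      \<and> (\<Sum>x\<in>X. \<Sum>y\<in>max_indep_sets X E. Q x y) = 1
      \<and> (\<forall>x\<in>X. (\<Sum>y\<in>max_indep_sets X E. Q x y) = P x)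
      \<and> (\<Sum>x\<in>X. \<Sum>y\<in>max_indep_sets X E. if x \<in> y then Q x y else 0) = 1}"

definition Y_marginal :: "'a set \<Rightarrow> ('a \<Rightarrow> 'a set \<Rightarrow> real) \<Rightarrow> 'a set \<Rightarrow> real" where
  "Y_marginal X Q y = (\<Sum>x\<in>X. Q x y)"

text \<open>The minimum is taken as the infimum over Delta (it is attained).\<close>
definition H2 :: "'a set \<Rightarrow> 'a set set \<Rightarrow> ('a \<Rightarrow> real) \<Rightarrow> real" where
  "H2 X E P = Inf ((\<lambda>Q. - log 2 (\<Sum>x\<in>X. \<Sum>y\<in>max_indep_sets X E.
        if x \<in> y then P x * Y_marginal X Q y else 0)) ` Delta X E P)"

end

theory Submission
  imports Defs
begin

text \<open>Draw \<open>(X', Y)\<close> from \<open>Q \<in> \<Delta>(G, P)\<close> and, independently, \<open>X\<close> from \<open>P\<close>. Then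
  \<open>X' \<in> Y\<close> almost surely, so on the event \<open>X \<in> Y\<close> both \<open>X\<close> and \<open>X'\<close> lie in the independent
  set \<open>Y\<close> and are non-adjacent. Since \<open>X\<close> and \<open>X'\<close> are independent with law \<open>P\<close>, this gives
  \<open>Pr[X \<in> Y] \<le> Pr[{X, X'} \<notin> E]\<close>, which is the claim after taking \<open>-log\<close>; the left-hand
  probability is positive, so the logarithms are finite.\<close>

definition nonadjacent_prob :: "'a set \<Rightarrow> 'a set set \<Rightarrow> ('a \<Rightarrow> real) \<Rightarrow> real" where
  "nonadjacent_prob X E P = (\<Sum>x\<in>X. \<Sum>x'\<in>X. if {x, x'} \<notin> E then P x * P x' else 0)"

definition membership_prob ::
    "'a set \<Rightarrow> 'a set set \<Rightarrow> ('a \<Rightarrow> real) \<Rightarrow> ('a \<Rightarrow> 'a set \<Rightarrow> real) \<Rightarrow> real" where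
  "membership_prob X E P Q =
     (\<Sum>x\<in>X. \<Sum>y\<in>max_indep_sets X E. if x \<in> y then P x * Y_marginal X Q y else 0)"

lemma I2_eq: "I2 X E P = - log 2 (nonadjacent_prob X E P)"
  by (simp add: I2_def nonadjacent_prob_def)

lemma H2_eq: "H2 X E P = Inf ((\<lambda>Q. - log 2 (membership_prob X E P Q)) ` Delta X E P)"
  by (simp add: H2_def membership_prob_def)

lemma finite_max_indep_sets: "finite X \<Longrightarrow> finite (max_indep_sets X E)"
  by (rule finite_subset[of _ "Pow X"]) (auto simp: max_indep_sets_def)

lemma independent_set_extends_to_maximal:
  assumes "finite X" "S \<subseteq> X" "independent_set E S"
  obtains T where "T \<in> max_indep_sets X E" "S \<subseteq> T"
proof -
  let ?F = "{T. T \<subseteq> X \<and> independent_set E T}"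
  have "finite ?F"
    by (rule finite_subset[of _ "Pow X"]) (use assms(1) in auto)
  moreover have "S \<in> ?F" using assms by blast
  ultimately obtain T where T: "T \<in> ?F" "S \<subseteq> T" and T_max: "\<forall>T'\<in>?F. T \<subseteq> T' \<longrightarrow> T = T'"
    by (metis (no_types, lifting) finite_has_maximal2)
  have "T \<in> max_indep_sets X E"
    using T T_max unfolding max_indep_sets_def by blast
  then show thesis using T(2) by (rule that)
qed

lemma singleton_independent_set:
  assumes "simple_graph X E"
  shows "independent_set E {x}"
proof -
  have "card {x, x} \<noteq> 2" by simp
  with assms show ?thesis by (auto simp: simple_graph_def independent_set_def)
qed

lemma ex_max_indep_set_containing:
  assumes "simple_graph X E" "x \<in> X"
  obtains y where "y \<in> max_indep_sets X E" "x \<in> y"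
proof -
  have "finite X" using assms(1) by (simp add: simple_graph_def)
  with assms(2) singleton_independent_set[OF assms(1)]
  obtain y where "y \<in> max_indep_sets X E" "{x} \<subseteq> y"
    by (metis empty_subsetI insert_subset independent_set_extends_to_maximal)
  then show thesis by (intro that) auto
qed

lemma Delta_nonempty:
  assumes "simple_graph X E" "is_pmf_on X P"
  shows "Delta X E P \<noteq> {}"
proof -
  let ?Y = "max_indep_sets X E"
  define f where "f x = (SOME y. y \<in> ?Y \<and> x \<in> y)" for x
  have f: "f x \<in> ?Y \<and> x \<in> f x" if "x \<in> X" for x
    unfolding f_def by (rule someI_ex) (meson ex_max_indep_set_containing[OF assms(1) that])
  define Q where "Q x y = (if y = f x then P x else 0)" for x y
  have fin: "finite ?Y"
    using assms(1) by (simp add: simple_graph_def finite_max_indep_sets)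
  have row: "(\<Sum>y\<in>?Y. Q x y) = P x" if "x \<in> X" for x
    using f[OF that] fin by (simp add: Q_def)
  have row_in: "(\<Sum>y\<in>?Y. if x \<in> y then Q x y else 0) = P x" if "x \<in> X" for x
  proof -
    have "(\<Sum>y\<in>?Y. if x \<in> y then Q x y else 0) = (\<Sum>y\<in>?Y. Q x y)"
      using f[OF that] by (intro sum.cong) (auto simp: Q_def)
    with row[OF that] show ?thesis by simp
  qed
  have "Q \<in> Delta X E P"
    using assms(2) row row_in by (simp add: Delta_def Q_def is_pmf_on_def)
  then show ?thesis by blast
qed

lemma Delta_vanishes_off_membership:
  assumes "finite X" "Q \<in> Delta X E P" "x \<in> X" "y \<in> max_indep_sets X E" "x \<notin> y"
  shows "Q x y = 0"
proof -
  let ?Y = "max_indep_sets X E"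
  define R where "R p = (if fst p \<in> snd p then 0 else Q (fst p) (snd p))" for p
  have fin: "finite (X \<times> ?Y)"
    using assms(1) by (simp add: finite_max_indep_sets)
  have Q_nonneg: "\<forall>x\<in>X. \<forall>y\<in>?Y. 0 \<le> Q x y"
    and total: "(\<Sum>x\<in>X. \<Sum>y\<in>?Y. Q x y) = 1"
    and on_membership: "(\<Sum>x\<in>X. \<Sum>y\<in>?Y. if x \<in> y then Q x y else 0) = 1"
    using assms(2) unfolding Delta_def by blast+
  have "(\<Sum>p\<in>X \<times> ?Y. R p) =
      (\<Sum>x\<in>X. \<Sum>y\<in>?Y. Q x y - (if x \<in> y then Q x y else 0))"
    unfolding sum.cartesian_product by (intro sum.cong refl) (auto simp: R_def)
  also have "\<dots> = 0"
    by (simp only: sum_subtractf total on_membership diff_self)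
  finally have "(\<Sum>p\<in>X \<times> ?Y. R p) = 0" .
  moreover have "0 \<le> R p" if "p \<in> X \<times> ?Y" for p
    using Q_nonneg that by (auto simp: R_def)
  ultimately have "\<forall>p \<in> X \<times> ?Y. R p = 0"
    using sum_nonneg_eq_0_iff[OF fin] by metis
  then have "R (x, y) = 0"
    using assms(3,4) by simp
  with assms(5) show ?thesis by (simp add: R_def)
qed

lemma Delta_marginal_nonneg:
  assumes "Q \<in> Delta X E P" "x \<in> X"
  shows "0 \<le> P x"
proof -
  have "0 \<le> (\<Sum>y\<in>max_indep_sets X E. Q x y)"
    using assms unfolding Delta_def by (blast intro: sum_nonneg)
  moreover have "(\<Sum>y\<in>max_indep_sets X E. Q x y) = P x"
    using assms unfolding Delta_def by blast
  ultimately show ?thesis by simp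
qed

lemma membership_prob_le_nonadjacent_prob:
  assumes fin: "finite X" and Q: "Q \<in> Delta X E P"
  shows "membership_prob X E P Q \<le> nonadjacent_prob X E P"
proof -
  let ?Y = "max_indep_sets X E"
  have Q_nonneg: "0 \<le> Q x y" if "x \<in> X" "y \<in> ?Y" for x y
    using Q that unfolding Delta_def by blast
  have Q_row: "(\<Sum>y\<in>?Y. Q x y) = P x" if "x \<in> X" for x
    using Q that unfolding Delta_def by blast
  have P_nonneg: "0 \<le> P x" if "x \<in> X" for x
    using Q that by (rule Delta_marginal_nonneg)
  have "membership_prob X E P Q =
      (\<Sum>x\<in>X. \<Sum>y\<in>?Y. \<Sum>x'\<in>X. if x \<in> y \<and> x' \<in> y then P x * Q x' y else 0)"
    unfolding membership_prob_def Y_marginal_def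
  proof (intro sum.cong refl)
    fix x y assume "y \<in> ?Y"
    then have "(\<Sum>x'\<in>X. if x \<in> y \<and> x' \<in> y then P x * Q x' y else 0)
        = (\<Sum>x'\<in>X. if x \<in> y then P x * Q x' y else 0)"
      by (intro sum.cong) (auto simp: Delta_vanishes_off_membership[OF fin Q])
    then show "(if x \<in> y then P x * (\<Sum>x'\<in>X. Q x' y) else 0) =
        (\<Sum>x'\<in>X. if x \<in> y \<and> x' \<in> y then P x * Q x' y else 0)"
      by (simp add: sum_distrib_left)
  qed
  also have "\<dots> \<le> (\<Sum>x\<in>X. \<Sum>y\<in>?Y. \<Sum>x'\<in>X.
      if {x, x'} \<notin> E \<and> x' \<in> y then P x * Q x' y else 0)"
  proof (intro sum_mono)
    fix x y x' assume "x \<in> X" "y \<in> ?Y" "x' \<in> X"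
    moreover from \<open>y \<in> ?Y\<close> have "x \<in> y \<Longrightarrow> x' \<in> y \<Longrightarrow> {x, x'} \<notin> E"
      by (auto simp: max_indep_sets_def independent_set_def)
    ultimately show "(if x \<in> y \<and> x' \<in> y then P x * Q x' y else 0)
        \<le> (if {x, x'} \<notin> E \<and> x' \<in> y then P x * Q x' y else 0)"
      using P_nonneg Q_nonneg by auto
  qed
  also have "\<dots> = (\<Sum>x\<in>X. \<Sum>x'\<in>X. \<Sum>y\<in>?Y.
      if {x, x'} \<notin> E \<and> x' \<in> y then P x * Q x' y else 0)"
    by (intro sum.cong refl sum.swap)
  also have "\<dots> = (\<Sum>x\<in>X. \<Sum>x'\<in>X.
      if {x, x'} \<notin> E then P x * (\<Sum>y\<in>?Y. if x' \<in> y then Q x' y else 0) else 0)"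
    by (intro sum.cong refl) (simp add: sum_distrib_left if_distrib cong: if_cong)
  also have "\<dots> \<le> nonadjacent_prob X E P"
    unfolding nonadjacent_prob_def
  proof (intro sum_mono)
    fix x x' assume "x \<in> X" "x' \<in> X"
    have "(\<Sum>y\<in>?Y. if x' \<in> y then Q x' y else 0) \<le> P x'"
      unfolding Q_row[OF \<open>x' \<in> X\<close>, symmetric]
      by (intro sum_mono) (use Q_nonneg \<open>x' \<in> X\<close> in auto)
    then show "(if {x, x'} \<notin> E then P x * (\<Sum>y\<in>?Y. if x' \<in> y then Q x' y else 0) else 0)
        \<le> (if {x, x'} \<notin> E then P x * P x' else 0)"
      using P_nonneg[OF \<open>x \<in> X\<close>] by (simp add: mult_left_mono)
  qed
  finally show ?thesis .
qed

lemma membership_prob_pos: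
  assumes fin: "finite X" and Q: "Q \<in> Delta X E P"
  shows "0 < membership_prob X E P Q"
proof -
  let ?Y = "max_indep_sets X E"
  have finY: "finite ?Y"
    using fin by (rule finite_max_indep_sets)
  have Q_nonneg: "0 \<le> Q x y" if "x \<in> X" "y \<in> ?Y" for x y
    using Q that unfolding Delta_def by blast
  have Q_row: "(\<Sum>y\<in>?Y. Q x y) = P x" if "x \<in> X" for x
    using Q that unfolding Delta_def by blast
  have on_membership: "(\<Sum>x\<in>X. \<Sum>y\<in>?Y. if x \<in> y then Q x y else 0) = 1"
    using Q unfolding Delta_def by blast
  have "\<exists>x\<in>X. \<exists>y\<in>?Y. x \<in> y \<and> 0 < Q x y"
  proof (rule ccontr)
    assume "\<not> ?thesis"
    then have "(\<Sum>x\<in>X. \<Sum>y\<in>?Y. if x \<in> y then Q x y else 0) \<le> 0"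
      by (intro sum_nonpos) (auto simp: not_less)
    with on_membership show False by simp
  qed
  then obtain x y where xy: "x \<in> X" "y \<in> ?Y" "x \<in> y" and pos: "0 < Q x y"
    by blast
  have "Q x y \<le> P x"
    unfolding Q_row[OF xy(1), symmetric]
    using finY xy Q_nonneg by (intro member_le_sum) auto
  moreover have "Q x y \<le> Y_marginal X Q y"
    unfolding Y_marginal_def using fin xy Q_nonneg by (intro member_le_sum) auto
  ultimately have term_pos: "0 < P x * Y_marginal X Q y"
    using pos by simp
  have term_nonneg: "0 \<le> P x' * Y_marginal X Q y'" if "x' \<in> X" "y' \<in> ?Y" for x' y'
    using that Q_nonneg Delta_marginal_nonneg[OF Q]
    by (auto simp: Y_marginal_def intro!: mult_nonneg_nonneg sum_nonneg)
  show ?thesis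
    unfolding membership_prob_def
  proof (rule sum_pos2[OF fin xy(1)])
    show "0 < (\<Sum>y\<in>?Y. if x \<in> y then P x * Y_marginal X Q y else 0)"
      using term_pos term_nonneg xy by (intro sum_pos2[OF finY xy(2)]) auto
    show "0 \<le> (\<Sum>y\<in>?Y. if x' \<in> y then P x' * Y_marginal X Q y else 0)" if "x' \<in> X" for x'
      using term_nonneg that by (intro sum_nonneg) auto
  qed
qed

theorem proposition4:
  fixes X :: "'a set" and E :: "'a set set" and P :: "'a \<Rightarrow> real"
  assumes "simple_graph X E" and "is_pmf_on X P"
  shows "I2 X E P \<le> H2 X E P"
proof -
  have fin: "finite X"
    using assms(1) by (simp add: simple_graph_def)
  have "I2 X E P \<le> - log 2 (membership_prob X E P Q)" if Q: "Q \<in> Delta X E P" for Q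
    using membership_prob_pos[OF fin Q] membership_prob_le_nonadjacent_prob[OF fin Q]
    by (simp add: I2_eq)
  then show ?thesis
    unfolding H2_eq using Delta_nonempty[OF assms] by (intro cInf_greatest) auto
qed

end
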